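(* Let $r\ge 1$ and $n\ge 3r+4$ be integers. Then $\rho(K_{3,n-3})>\rho(H_{n,r})$.
   Context: $\rho$ denotes the spectral radius (largest adjacency eigenvalue). $K_1\vee rK_3$ is the join of a single vertex with $r$ disjoint triangles; let $u$ be its vertex of degree $3r$ (any vertex if $r=1$). In $K_{3,n-3r-3}$ (complete bipartite with parts of sizes $3$ and $n-3r-3$), let $vw$ be an edge where $v$ has degree $n-3r-3$ and $w$ has degree $3$. $H_{n,r}$ is the graph obtained from the disjoint union of $K_1\vee rK_3$ and $K_{3,n-3r-3}$ by identifying $u$ with $v$. *)

theory Defs
  imports "Jordan_Normal_Form.Spectral_Radius"
begin

text \<open>Simple graphs on the vertex set {0..<n}, given by a symmetric irreflexive
adjacency predicate. The adjacency matrix is the n x n 0/1 matrix (over complex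
numbers, so that the library notion of spectral radius applies).\<close>

definition adj_mat :: "nat \<Rightarrow> (nat \<Rightarrow> nat \<Rightarrow> bool) \<Rightarrow> complex mat" where
  "adj_mat n E = mat n n (\<lambda>(i, j). if E i j then 1 else 0)"

definition graph_rho :: "nat \<Rightarrow> (nat \<Rightarrow> nat \<Rightarrow> bool) \<Rightarrow> real" where
  "graph_rho n E = spectral_radius (adj_mat n E)"

definition Kbip_adj :: "nat \<Rightarrow> nat \<Rightarrow> nat \<Rightarrow> nat \<Rightarrow> bool" where
  "Kbip_adj s n i j \<longleftrightarrow> i < n \<and> j < n \<and> ((i < s \<and> s \<le> j) \<or> (j < s \<and> s \<le> i))"

text \<open>H_{n,r} on {0..<n}: vertex 0 is the identified vertex u = v.
  Vertices 1..3r form r triangles {3k+1,3k+2,3k+3} (k < r), all joined to 0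
  (this is K_1 join rK_3).  The 3-side of K_{3,n-3r-3} is {0, 3r+1, 3r+2},
  the other side is {3r+3..<n}, of size n-3r-3.\<close>
definition H_adj :: "nat \<Rightarrow> nat \<Rightarrow> nat \<Rightarrow> nat \<Rightarrow> bool" where
  "H_adj n r i j \<longleftrightarrow> i < n \<and> j < n \<and> i \<noteq> j \<and>
     ( (1 \<le> i \<and> i \<le> 3*r \<and> 1 \<le> j \<and> j \<le> 3*r \<and> (i - 1) div 3 = (j - 1) div 3)
     \<or> (i = 0 \<and> 1 \<le> j \<and> j \<le> 3*r) \<or> (j = 0 \<and> 1 \<le> i \<and> i \<le> 3*r)
     \<or> ((i = 0 \<or> i = 3*r+1 \<or> i = 3*r+2) \<and> 3*r+3 \<le> j)
     \<or> ((j = 0 \<or> j = 3*r+1 \<or> j = 3*r+2) \<and> 3*r+3 \<le> i))"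

end

theory Submission
  imports Defs
begin

(* Set s = sqrt (3 (n - 3)). The vector equal to sqrt (n - 3) on the 3-side of K_{3,n-3} and to
   sqrt 3 on the other side is an eigenvector for s, so rho(K_{3,n-3}) >= s. For H_{n,r} we
   exhibit a positive vector x, constant on the classes {u}, triangle vertices, the other two
   vertices of the 3-side and the large side, with A x < s x in every coordinate; the
   Collatz-Wielandt bound then gives rho(H_{n,r}) < s. The only non-trivial inequality is the
   one in the row of u, which holds because 3 s < 9 r + 4 (n - 3 r - 3). *)

definition neighbours :: "nat \<Rightarrow> (nat \<Rightarrow> nat \<Rightarrow> bool) \<Rightarrow> nat \<Rightarrow> nat set" where
  "neighbours n E i = {j. j < n \<and> E i j}"

lemma dim_row_adj_mat [simp]: "dim_row (adj_mat n E) = n"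
  and adj_mat_carrier [simp]: "adj_mat n E \<in> carrier_mat n n"
  by (simp_all add: adj_mat_def)

lemma adj_mat_mult_vec_nth:
  assumes "v \<in> carrier_vec n" and "i < n"
  shows "(adj_mat n E *\<^sub>v v) $ i = (\<Sum>j\<in>neighbours n E i. v $ j)"
proof -
  have "(adj_mat n E *\<^sub>v v) $ i = (\<Sum>j<n. if E i j then v $ j else 0)"
    using assms by (auto simp: adj_mat_def mult_mat_vec_def scalar_prod_def lessThan_atLeast0
        intro!: sum.cong)
  also have "\<dots> = (\<Sum>j\<in>neighbours n E i. v $ j)"
    unfolding neighbours_def using sum.inter_filter[of "{..<n}" "\<lambda>j. v $ j" "E i"]
    by (simp add: lessThan_def)
  finally show ?thesis .
qed

lemma graph_rho_ge_eigenvalue: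
  fixes x :: "nat \<Rightarrow> real"
  assumes eigen: "\<forall>i<n. sum x (neighbours n E i) = \<mu> * x i"
    and "k < n" and "x k \<noteq> 0"
  shows "\<bar>\<mu>\<bar> \<le> graph_rho n E"
proof -
  define v where "v = vec n (\<lambda>j. complex_of_real (x j))"
  have v: "v \<in> carrier_vec n" by (simp add: v_def)
  have "v \<noteq> 0\<^sub>v n"
    using assms(2,3) by (auto simp: v_def dest!: arg_cong[where f = "\<lambda>w. w $ k"])
  moreover have "adj_mat n E *\<^sub>v v = complex_of_real \<mu> \<cdot>\<^sub>v v"
  proof (rule eq_vecI)
    fix i assume "i < dim_vec (complex_of_real \<mu> \<cdot>\<^sub>v v)"
    then have i: "i < n" using v by simp
    have "(adj_mat n E *\<^sub>v v) $ i = (\<Sum>j\<in>neighbours n E i. complex_of_real (x j))"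
      unfolding adj_mat_mult_vec_nth[OF v i] by (intro sum.cong) (auto simp: v_def neighbours_def)
    also have "\<dots> = complex_of_real (sum x (neighbours n E i))" by simp
    also have "\<dots> = (complex_of_real \<mu> \<cdot>\<^sub>v v) $ i"
      using eigen i by (simp add: v_def)
    finally show "(adj_mat n E *\<^sub>v v) $ i = (complex_of_real \<mu> \<cdot>\<^sub>v v) $ i" .
  qed (simp add: v_def)
  ultimately have "complex_of_real \<mu> \<in> spectrum (adj_mat n E)"
    using v by (auto simp: spectrum_def eigenvalue_def eigenvector_def)
  then have "norm (complex_of_real \<mu>) \<in> norm ` spectrum (adj_mat n E)" by (rule imageI)
  then have "norm (complex_of_real \<mu>) \<le> graph_rho n E"
    unfolding graph_rho_def using assms(2)
    by (intro spectral_radius_mem_max(2)[OF adj_mat_carrier]) auto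
  then show ?thesis by simp
qed

text \<open>Collatz--Wielandt bound: at an index maximising the ratio \<open>\<bar>v\<^sub>i\<bar> / x\<^sub>i\<close> for an
  eigenvector \<open>v\<close> of the eigenvalue of maximal modulus, the eigen-equation forces that
  modulus below \<open>s\<close>.\<close>

lemma graph_rho_less_if_subeigenvector:
  fixes x :: "nat \<Rightarrow> real"
  assumes "0 < n" and pos: "\<forall>i<n. 0 < x i"
    and sub: "\<forall>i<n. sum x (neighbours n E i) < s * x i"
  shows "graph_rho n E < s"
proof -
  obtain lam where "lam \<in> spectrum (adj_mat n E)" and rho: "graph_rho n E = norm lam"
    using spectral_radius_mem_max(1)[OF adj_mat_carrier \<open>0 < n\<close>] unfolding graph_rho_def by auto
  then obtain v where "eigenvector (adj_mat n E) v lam"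
    by (auto simp: spectrum_def eigenvalue_def)
  then have v: "v \<in> carrier_vec n" and "v \<noteq> 0\<^sub>v n" and Av: "adj_mat n E *\<^sub>v v = lam \<cdot>\<^sub>v v"
    by (auto simp: eigenvector_def)
  then obtain j0 where j0: "j0 < n" "v $ j0 \<noteq> 0"
    by (metis carrier_vecD eq_vecI index_zero_vec)
  define c where "c j = norm (v $ j) / x j" for j
  have "Max (c ` {..<n}) \<in> c ` {..<n}" using \<open>0 < n\<close> by (intro Max_in) auto
  then obtain i where i: "i < n" and "c i = Max (c ` {..<n})" by auto
  then have c_max: "c j \<le> c i" if "j < n" for j using that by simp
  have "0 < c j0" using j0 pos by (simp add: c_def)
  then have ci: "0 < c i" using c_max[OF j0(1)] by simp
  have vj: "norm (v $ j) \<le> c i * x j" if "j < n" for j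
    using c_max[OF that] pos that by (simp add: c_def divide_le_eq)
  have "norm lam * norm (v $ i) = norm ((lam \<cdot>\<^sub>v v) $ i)"
    using i v by (simp add: norm_mult)
  also have "\<dots> = norm (\<Sum>j\<in>neighbours n E i. v $ j)"
    by (simp flip: Av add: adj_mat_mult_vec_nth[OF v i])
  also have "\<dots> \<le> (\<Sum>j\<in>neighbours n E i. norm (v $ j))" by (rule norm_sum)
  also have "\<dots> \<le> (\<Sum>j\<in>neighbours n E i. c i * x j)"
    by (intro sum_mono vj) (simp add: neighbours_def)
  also have "\<dots> = c i * sum x (neighbours n E i)" by (simp add: sum_distrib_left)
  also have "\<dots> < c i * (s * x i)" using sub i ci by simp
  also have "\<dots> = s * norm (v $ i)" using pos i by (simp add: c_def less_imp_neq[symmetric])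
  finally have "norm lam * norm (v $ i) < s * norm (v $ i)" .
  moreover have "0 < norm (v $ i)" using ci pos i by (simp add: c_def zero_less_divide_iff)
  ultimately show ?thesis using rho by simp
qed

lemma Kbip_neighbours:
  assumes "s \<le> n" and "i < n"
  shows "neighbours n (Kbip_adj s n) i = (if i < s then {s..<n} else {0..<s})"
  using assms by (auto simp: neighbours_def Kbip_adj_def)

lemma graph_rho_Kbip_ge:
  assumes "0 < s" and "s < n"
  shows "sqrt (real (s * (n - s))) \<le> graph_rho n (Kbip_adj s n)"
proof -
  define a where "a = sqrt (real (n - s))"
  define b where "b = sqrt (real s)"
  define x where "x j = (if j < s then a else b)" for j
  have "\<forall>i<n. sum x (neighbours n (Kbip_adj s n) i) = (a * b) * x i"
  proof (intro allI impI)
    fix i assume "i < n"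
    show "sum x (neighbours n (Kbip_adj s n) i) = (a * b) * x i"
    proof (cases "i < s")
      case True
      have "sum x {s..<n} = real (n - s) * b" by (simp add: x_def)
      also have "\<dots> = (a * b) * a" by (simp add: a_def)
      finally show ?thesis using True \<open>i < n\<close> assms by (simp add: Kbip_neighbours x_def)
    next
      case False
      have "sum x {0..<s} = real s * a" by (simp add: x_def)
      also have "\<dots> = (a * b) * b" by (simp add: b_def)
      finally show ?thesis using False \<open>i < n\<close> assms by (simp add: Kbip_neighbours x_def)
    qed
  qed
  moreover have "x 0 \<noteq> 0" using assms by (simp add: x_def a_def)
  ultimately have "\<bar>a * b\<bar> \<le> graph_rho n (Kbip_adj s n)"
    using assms by (intro graph_rho_ge_eigenvalue[where k = 0]) auto
  moreover have "sqrt (real (s * (n - s))) = \<bar>a * b\<bar>"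
    by (simp add: a_def b_def real_sqrt_mult abs_mult)
  ultimately show ?thesis by simp
qed


lemma H_hub_row_inequality:
  fixes r m s :: real
  assumes "1 \<le> r" and "1 \<le> m" and "0 < s" and s_sq: "s\<^sup>2 = 9 * r + 3 * m"
  shows "2 < s" and "3 * r / (s - 2) + m * s / (9 * r + m) < s"
proof -
  have "2\<^sup>2 < s\<^sup>2" using assms by simp
  then show "2 < s" by (rule power_less_imp_less_base) (use \<open>0 < s\<close> in simp)
  then have "0 < s - 2" and "0 < 9 * r + m" using assms by simp_all
  have "r \<le> r * r" and "m \<le> r * m" using assms by simp_all
  have "(3 * s)\<^sup>2 = 81 * r + 27 * m" using s_sq by (simp add: power_mult_distrib)
  also have "\<dots> < 81 * (r * r) + 72 * (r * m) + 16 * (m * m)"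
    using \<open>r \<le> r * r\<close> \<open>m \<le> r * m\<close> \<open>1 \<le> m\<close> mult_nonneg_nonneg[of m m] by linarith
  also have "\<dots> = (9 * r + 4 * m)\<^sup>2" by (simp add: power2_eq_square algebra_simps)
  finally have "3 * s < 9 * r + 4 * m"
    by (rule power_less_imp_less_base) (use assms in simp)
  have "s * ((s - 2) * (9 * r + m)) - (3 * r * (9 * r + m) + m * s * (s - 2))
      = s\<^sup>2 * (9 * r) - 18 * r * s - 27 * r * r - 3 * r * m"
    by (simp add: power2_eq_square algebra_simps)
  also have "\<dots> = 6 * r * (9 * r + 4 * m - 3 * s)"
    unfolding s_sq by (simp add: algebra_simps)
  also have "\<dots> > 0" using \<open>3 * s < 9 * r + 4 * m\<close> assms by simp
  finally have key: "3 * r * (9 * r + m) + m * s * (s - 2) < s * ((s - 2) * (9 * r + m))"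
    by simp
  have "3 * r / (s - 2) + m * s / (9 * r + m)
      = (3 * r * (9 * r + m) + m * s * (s - 2)) / ((s - 2) * (9 * r + m))"
    using \<open>0 < s - 2\<close> \<open>0 < 9 * r + m\<close> by (simp add: add_frac_eq)
  also have "\<dots> < s"
    using key \<open>0 < s - 2\<close> \<open>0 < 9 * r + m\<close> by (simp only: pos_divide_less_eq mult_pos_pos)
  finally show "3 * r / (s - 2) + m * s / (9 * r + m) < s" .
qed

lemma pred_div_3_eq_iff: "(j - 1) div 3 = k \<and> 1 \<le> j \<longleftrightarrow> j \<in> {3 * k + 1..3 * k + 3}"
  for j k :: nat
  by auto

lemma H_neighbours_hub:
  assumes "3 * r + 3 \<le> n"
  shows "neighbours n (H_adj n r) 0 = {1..3 * r} \<union> {3 * r + 3..<n}"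
  using assms by (auto simp: neighbours_def H_adj_def)

lemma H_neighbours_triangle:
  assumes "3 * r + 3 \<le> n" and "1 \<le> i" and "i \<le> 3 * r"
  obtains k where "i \<in> {3 * k + 1..3 * k + 3}" and "3 * k + 3 \<le> 3 * r"
    and "neighbours n (H_adj n r) i = insert 0 ({3 * k + 1..3 * k + 3} - {i})"
proof -
  define k where "k = (i - 1) div 3"
  have "i \<in> {3 * k + 1..3 * k + 3}" using pred_div_3_eq_iff[of i k] assms by (simp add: k_def)
  moreover from this have "3 * k + 3 \<le> 3 * r" using assms by auto presburger
  moreover have adj: "H_adj n r i j \<longleftrightarrow>
      j < n \<and> j \<noteq> i \<and> (j = 0 \<or> (1 \<le> j \<and> j \<le> 3 * r \<and> (j - 1) div 3 = k))" for j
    using assms unfolding H_adj_def k_def by auto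
  have block: "(1 \<le> j \<and> j \<le> 3 * r \<and> (j - 1) div 3 = k) \<longleftrightarrow> j \<in> {3 * k + 1..3 * k + 3}" for j
    using pred_div_3_eq_iff[of j k] \<open>3 * k + 3 \<le> 3 * r\<close> by auto
  have "neighbours n (H_adj n r) i = insert 0 ({3 * k + 1..3 * k + 3} - {i})"
    using assms \<open>3 * k + 3 \<le> 3 * r\<close> unfolding neighbours_def adj block by auto
  ultimately show ?thesis by (rule that)
qed

lemma H_neighbours_small_side:
  assumes "3 * r + 3 \<le> n" and "i \<in> {3 * r + 1, 3 * r + 2}"
  shows "neighbours n (H_adj n r) i = {3 * r + 3..<n}"
  using assms by (auto simp: neighbours_def H_adj_def)

lemma H_neighbours_large_side:
  assumes "3 * r + 3 \<le> i" and "i < n"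
  shows "neighbours n (H_adj n r) i = {0, 3 * r + 1, 3 * r + 2}"
  using assms by (auto simp: neighbours_def H_adj_def)

definition H_class_vector :: "nat \<Rightarrow> real \<Rightarrow> real \<Rightarrow> real \<Rightarrow> real \<Rightarrow> nat \<Rightarrow> real" where
  "H_class_vector r a b c d j =
     (if j = 0 then a else if j \<le> 3 * r then b else if j \<le> 3 * r + 2 then c else d)"

lemma H_class_vector_neighbour_sum:
  assumes "3 * r + 3 \<le> n" and "i < n"
  shows "sum (H_class_vector r a b c d) (neighbours n (H_adj n r) i) =
    (if i = 0 then real (3 * r) * b + real (n - (3 * r + 3)) * d
     else if i \<le> 3 * r then a + 2 * b
     else if i \<le> 3 * r + 2 then real (n - (3 * r + 3)) * d
     else a + 2 * c)"
proof -
  let ?x = "H_class_vector r a b c d"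
  consider "i = 0" | "1 \<le> i \<and> i \<le> 3 * r" | "i \<in> {3 * r + 1, 3 * r + 2}" | "3 * r + 3 \<le> i"
    by fastforce
  then show ?thesis
  proof cases
    case 1
    have "sum ?x ({1..3 * r} \<union> {3 * r + 3..<n}) = sum ?x {1..3 * r} + sum ?x {3 * r + 3..<n}"
      by (intro sum.union_disjoint) auto
    then show ?thesis using 1 assms by (simp add: H_neighbours_hub H_class_vector_def)
  next
    case 2
    obtain k where "i \<in> {3 * k + 1..3 * k + 3}" and "3 * k + 3 \<le> 3 * r"
      and "neighbours n (H_adj n r) i = insert 0 ({3 * k + 1..3 * k + 3} - {i})"
      by (rule H_neighbours_triangle[of r n i]) (use 2 assms in auto)
    then show ?thesis using 2 by (simp add: H_class_vector_def card_Diff_singleton)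
  next
    case 3
    then show ?thesis using assms by (auto simp: H_neighbours_small_side H_class_vector_def)
  next
    case 4
    then show ?thesis using assms by (simp add: H_neighbours_large_side H_class_vector_def)
  qed
qed

text \<open>For the class values \<open>(\<theta>, 1 / p, m / q + \<delta>, s / q)\<close> the four row inequalities reduce
  to \<open>L < s \<theta>\<close>, \<open>\<theta> < 1\<close>, \<open>\<delta> > 0\<close> and \<open>\<theta> + 2 \<delta> < 1\<close>, using \<open>s / p = 1 + 2 / p\<close> and
  \<open>s\<^sup>2 / q = 1 + 2 m / q\<close>; such \<open>\<theta>, \<delta>\<close> exist because \<open>L < s\<close>.\<close>

lemma graph_rho_H_less:
  assumes "1 \<le> r" and "3 * r + 4 \<le> n"
  shows "graph_rho n (H_adj n r) < sqrt (real (3 * (n - 3)))"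
proof -
  define s where "s = sqrt (real (3 * (n - 3)))"
  define m where "m = real (n - (3 * r + 3))"
  define p where "p = s - 2"
  define q where "q = 9 * real r + m"
  define L where "L = 3 * real r / p + m * s / q"
  have "1 \<le> m" and "0 < s" using assms by (simp_all add: m_def s_def)
  moreover have s_sq: "s\<^sup>2 = 9 * real r + 3 * m" using assms by (simp add: s_def m_def of_nat_diff)
  ultimately have "2 < s" and "L < s" and "0 < q"
    using H_hub_row_inequality[of "real r" m s] assms by (simp_all add: L_def p_def q_def)
  then have "0 \<le> L / s" and "L / s < 1" using \<open>0 < s\<close> \<open>1 \<le> m\<close> by (simp_all add: L_def p_def)
  then obtain \<theta> where "L / s < \<theta>" and "\<theta> < 1" using dense by blast
  define \<delta> where "\<delta> = (1 - \<theta>) / 4"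
  define x where "x = H_class_vector r \<theta> (1 / p) (m / q + \<delta>) (s / q)"
  have "0 < \<theta>" and "0 < \<delta>" and "0 < p" and "0 < m / q" and "0 < s / q"
    using \<open>0 \<le> L / s\<close> \<open>L / s < \<theta>\<close> \<open>\<theta> < 1\<close> \<open>2 < s\<close> \<open>0 < q\<close> \<open>1 \<le> m\<close>
    by (simp_all add: \<delta>_def p_def)
  have hub: "3 * real r * (1 / p) + m * (s / q) < s * \<theta>"
    using \<open>L / s < \<theta>\<close> \<open>0 < s\<close> by (simp add: L_def divide_less_eq mult.commute)
  have "s * (1 / p) = 1 + 2 * (1 / p)" using \<open>0 < p\<close> by (simp add: p_def field_simps)
  then have triangle: "\<theta> + 2 * (1 / p) < s * (1 / p)" using \<open>\<theta> < 1\<close> by linarith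
  have small_side: "m * (s / q) < s * (m / q + \<delta>)"
    using \<open>0 < s\<close> \<open>0 < \<delta>\<close> by (simp add: algebra_simps)
  have "s * (s / q) = 1 + 2 * (m / q)"
    using s_sq \<open>0 < q\<close> by (simp add: q_def power2_eq_square field_simps)
  moreover have "\<theta> + 2 * \<delta> < 1" using \<open>\<theta> < 1\<close> by (simp add: \<delta>_def field_simps)
  ultimately have large_side: "\<theta> + 2 * (m / q + \<delta>) < s * (s / q)"
    by (simp only: distrib_left)
  have "\<forall>i<n. 0 < x i"
    using \<open>0 < \<theta>\<close> \<open>0 < p\<close> \<open>0 < m / q\<close> \<open>0 < \<delta>\<close> \<open>0 < s / q\<close> by (simp add: x_def H_class_vector_def)
  moreover have "\<forall>i<n. sum x (neighbours n (H_adj n r) i) < s * x i"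
  proof (intro allI impI)
    fix i assume "i < n"
    then have "sum x (neighbours n (H_adj n r) i) =
        (if i = 0 then real (3 * r) * (1 / p) + m * (s / q) else if i \<le> 3 * r then \<theta> + 2 * (1 / p)
         else if i \<le> 3 * r + 2 then m * (s / q) else \<theta> + 2 * (m / q + \<delta>))"
      unfolding x_def m_def using assms by (intro H_class_vector_neighbour_sum) simp_all
    then show "sum x (neighbours n (H_adj n r) i) < s * x i"
      using hub triangle small_side large_side by (simp add: x_def H_class_vector_def)
  qed
  ultimately show ?thesis
    using graph_rho_less_if_subeigenvector[of n x] assms by (simp add: s_def)
qed

theorem lemma4p3:
  fixes n r :: nat
  assumes "r \<ge> 1" and "n \<ge> 3 * r + 4"
  shows "graph_rho n (Kbip_adj 3 n) > graph_rho n (H_adj n r)"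
proof -
  have "graph_rho n (H_adj n r) < sqrt (real (3 * (n - 3)))"
    using assms by (rule graph_rho_H_less)
  also have "\<dots> \<le> graph_rho n (Kbip_adj 3 n)"
    using assms graph_rho_Kbip_ge[of 3 n] by simp
  finally show ?thesis .
qed

end
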